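(* Let $H \subset L$ be light-cone regular and let $h_1, \ldots, h_m \in L$. Then for every sufficiently large integer $\ell > 0$ we have $h_1, \ldots, h_m \in H + \ell v_N = \{ h + \ell v_N \mid h \in H \}$.
   Context: Let $L$ be a finitely generated $\mathbb{Z}$-module and $v_1,\dots,v_N\in L$ distinct elements which generate $L$ as a $\mathbb{Z}$-module and are linearly independent over $\mathbb{Z}_{\ge 0}$ (i.e. $\sum_i a_i v_i=0$ with all $a_i\in\mathbb{Z}_{\ge0}$ forces all $a_i=0$). Let $S=\{\sum_i a_iv_i : a_i\in\mathbb{Z}_{\ge0}\}$ and define the partial order $h_1\le h_2$ iff $h_1-h_2\in S$. Assume $v_N$ is the minimum of $\{0,v_1,\dots,v_N\}$ with respect to $\le$. A nonempty subset $H\subset L$ is light-cone regular if for every $h\in H$ the set $\{h'\in H: h'\le h\}$ is finite and $\{h'\in L: h'\ge h\}\subset H$. *)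

theory Defs
  imports Main
begin

definition nsmul :: "nat \<Rightarrow> 'a::comm_monoid_add \<Rightarrow> 'a" where
  "nsmul n x = (\<Sum>_\<in>{..<n}. x)"

definition zsmul :: "int \<Rightarrow> 'a::ab_group_add \<Rightarrow> 'a" where
  "zsmul k x = (if k \<ge> 0 then nsmul (nat k) x else - nsmul (nat (- k)) x)"

definition semigrp :: "nat \<Rightarrow> (nat \<Rightarrow> 'a::ab_group_add) \<Rightarrow> 'a set" where
  "semigrp N v = {(\<Sum>i=1..N. nsmul (a i) (v i)) | a. True}"

definition sleq :: "nat \<Rightarrow> (nat \<Rightarrow> 'a::ab_group_add) \<Rightarrow> 'a \<Rightarrow> 'a \<Rightarrow> bool" where
  "sleq N v h1 h2 \<longleftrightarrow> h1 - h2 \<in> semigrp N v"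

definition light_cone_regular :: "nat \<Rightarrow> (nat \<Rightarrow> 'a::ab_group_add) \<Rightarrow> 'a set \<Rightarrow> bool" where
  "light_cone_regular N v H \<longleftrightarrow> H \<noteq> {} \<and>
     (\<forall>h\<in>H. finite {h'\<in>H. sleq N v h' h} \<and> {h'. sleq N v h h'} \<subseteq> H)"

end

theory Submission
  imports Defs
begin

text \<open>Every element of \<open>L\<close> has the form \<open>s - k v\<^sub>N\<close> with \<open>s \<in> S\<close>: write it as an integer
  combination of the \<open>v\<^sub>i\<close> and trade each negative term \<open>-c v\<^sub>i\<close> for \<open>c (v\<^sub>N - v\<^sub>i) - c v\<^sub>N\<close>,
  where \<open>v\<^sub>N - v\<^sub>i \<in> S\<close> because \<open>v\<^sub>N \<le> v\<^sub>i\<close>. Fix \<open>h\<^sub>0 \<in> H\<close>. If \<open>h\<^sub>0 - h = s - k v\<^sub>N\<close>, then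
  \<open>h\<^sub>0 - (h - l v\<^sub>N) = s + (l - k) v\<^sub>N \<in> S\<close> for \<open>l \<ge> k\<close>, because \<open>v\<^sub>N \<le> 0\<close> means \<open>v\<^sub>N \<in> S\<close>.
  So \<open>h - l v\<^sub>N \<ge> h\<^sub>0\<close>, and \<open>h - l v\<^sub>N\<close> lies in \<open>H\<close>.\<close>

lemma nsmul_0 [simp]: "nsmul 0 x = 0"
  by (simp add: nsmul_def)

lemma nsmul_Suc [simp]: "nsmul (Suc n) x = x + nsmul n x"
  by (simp add: nsmul_def add.commute)

lemma nsmul_add: "nsmul (m + n) x = nsmul m x + nsmul n x"
  by (induction m) (simp_all add: add.assoc)

lemma nsmul_diff: "nsmul n (x - y) = nsmul n x - nsmul n (y::'a::ab_group_add)"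
  by (induction n) (simp_all add: algebra_simps)

lemma zero_in_semigrp: "0 \<in> semigrp N v"
  unfolding semigrp_def by (intro CollectI exI[of _ "\<lambda>_. 0"]) simp

lemma add_in_semigrp:
  assumes "x \<in> semigrp N v" "y \<in> semigrp N v"
  shows "x + y \<in> semigrp N v"
proof -
  obtain a b where "x = (\<Sum>i=1..N. nsmul (a i) (v i))" "y = (\<Sum>i=1..N. nsmul (b i) (v i))"
    using assms unfolding semigrp_def by blast
  then have "x + y = (\<Sum>i=1..N. nsmul (a i + b i) (v i))"
    by (simp add: nsmul_add sum.distrib)
  then show ?thesis
    unfolding semigrp_def by (intro CollectI exI[of _ "\<lambda>i. a i + b i"]) simp
qed

lemma nsmul_in_semigrp: "x \<in> semigrp N v \<Longrightarrow> nsmul n x \<in> semigrp N v"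
  by (induction n) (simp_all add: zero_in_semigrp add_in_semigrp)

lemma generator_in_semigrp:
  assumes "i \<in> {1..N}"
  shows "v i \<in> semigrp N v"
proof -
  have "(\<Sum>j=1..N. nsmul (if j = i then 1 else 0) (v j)) = (\<Sum>j=1..N. if j = i then v i else 0)"
    by (rule sum.cong) auto
  also have "\<dots> = v i"
    using assms by simp
  finally show ?thesis
    unfolding semigrp_def by (intro CollectI exI[of _ "\<lambda>j. if j = i then 1 else 0"]) simp
qed

lemma zsmul_generator_eq_semigrp_minus_nsmul:
  assumes "i \<in> {1..N}" "sleq N v (v N) (v i)"
  shows "\<exists>s\<in>semigrp N v. \<exists>k. zsmul c (v i) = s - nsmul k (v N)"
proof (cases "c \<ge> 0")
  case True
  then have "zsmul c (v i) = nsmul (nat c) (v i) - nsmul 0 (v N)"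
    by (simp add: zsmul_def)
  then show ?thesis
    using nsmul_in_semigrp[OF generator_in_semigrp[OF assms(1)]] by blast
next
  case False
  then have "zsmul c (v i) = nsmul (nat (- c)) (v N - v i) - nsmul (nat (- c)) (v N)"
    by (simp add: zsmul_def nsmul_diff)
  moreover have "v N - v i \<in> semigrp N v"
    using assms(2) by (simp add: sleq_def)
  ultimately show ?thesis
    using nsmul_in_semigrp by blast
qed

lemma sum_zsmul_eq_semigrp_minus_nsmul:
  assumes "\<forall>i\<in>{1..N}. sleq N v (v N) (v i)" "A \<subseteq> {1..N}"
  shows "\<exists>s\<in>semigrp N v. \<exists>k. (\<Sum>i\<in>A. zsmul (c i) (v i)) = s - nsmul k (v N)"
proof -
  have "finite A"
    using assms(2) finite_subset by blast
  then show ?thesis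
    using assms(2)
  proof (induction A rule: finite_induct)
    case empty
    show ?case
      using zero_in_semigrp[of N v] by (intro bexI[of _ 0] exI[of _ 0]) simp_all
  next
    case (insert a F)
    then obtain s k where s: "s \<in> semigrp N v"
      and F: "(\<Sum>i\<in>F. zsmul (c i) (v i)) = s - nsmul k (v N)"
      by auto
    obtain s' k' where s': "s' \<in> semigrp N v" and a: "zsmul (c a) (v a) = s' - nsmul k' (v N)"
      using zsmul_generator_eq_semigrp_minus_nsmul assms(1) insert.prems by blast
    have "(\<Sum>i\<in>insert a F. zsmul (c i) (v i)) = (s' + s) - nsmul (k' + k) (v N)"
      using insert.hyps F a by (simp add: nsmul_add algebra_simps)
    then show ?case
      using add_in_semigrp[OF s' s] by blast
  qed
qed

lemma eventually_minus_nsmul_in_light_cone_regular: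
  assumes H: "light_cone_regular N v H"
    and vN: "v N \<in> semigrp N v"
    and decomp: "\<And>y. \<exists>s\<in>semigrp N v. \<exists>k. y = s - nsmul k (v N)"
  shows "\<forall>\<^sub>F l in sequentially. x - nsmul l (v N) \<in> H"
proof -
  obtain h0 where "h0 \<in> H" and up: "{h'. sleq N v h0 h'} \<subseteq> H"
    using H by (auto simp: light_cone_regular_def)
  obtain s k where s: "s \<in> semigrp N v" and k: "h0 - x = s - nsmul k (v N)"
    using decomp by blast
  have shifted: "x - nsmul (k + d) (v N) \<in> H" for d
  proof -
    have "h0 - (x - nsmul (k + d) (v N)) = s + nsmul d (v N)"
      using k by (simp add: nsmul_add algebra_simps)
    then have "sleq N v h0 (x - nsmul (k + d) (v N))"
      using add_in_semigrp[OF s nsmul_in_semigrp[OF vN]] by (simp add: sleq_def)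
    then show ?thesis
      using up by blast
  qed
  show ?thesis
    unfolding eventually_sequentially
  proof (intro exI allI impI)
    fix l
    assume "k \<le> l"
    then show "x - nsmul l (v N) \<in> H"
      using shifted[of "l - k"] by simp
  qed
qed

theorem lemma3p2:
  fixes v :: "nat \<Rightarrow> 'a::ab_group_add" and N :: nat
    and H :: "'a set" and hs :: "'a list"
  assumes N_pos: "N \<ge> 1"
    and distinct: "inj_on v {1..N}"
    and generate: "\<forall>x. \<exists>c::nat \<Rightarrow> int. x = (\<Sum>i=1..N. zsmul (c i) (v i))"
    and pos_indep: "\<forall>a::nat \<Rightarrow> nat. (\<Sum>i=1..N. nsmul (a i) (v i)) = 0 \<longrightarrow> (\<forall>i\<in>{1..N}. a i = 0)"
    and vN_min: "sleq N v (v N) 0 \<and> (\<forall>i\<in>{1..N}. sleq N v (v N) (v i))"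
    and H: "light_cone_regular N v H"
  shows "\<exists>l0::nat. \<forall>l::nat. l \<ge> l0 \<and> l > 0 \<longrightarrow>
           set hs \<subseteq> {h + nsmul l (v N) | h. h \<in> H}"
proof -
  have vN: "v N \<in> semigrp N v"
    using vN_min by (simp add: sleq_def)
  have decomp: "\<exists>s\<in>semigrp N v. \<exists>k. y = s - nsmul k (v N)" for y
  proof -
    obtain c where "y = (\<Sum>i=1..N. zsmul (c i) (v i))"
      using generate by blast
    then show ?thesis
      using sum_zsmul_eq_semigrp_minus_nsmul[of N v "{1..N}" c] vN_min by simp
  qed
  have "\<forall>\<^sub>F l in sequentially. \<forall>x\<in>set hs. x - nsmul l (v N) \<in> H"
    using eventually_minus_nsmul_in_light_cone_regular[OF H vN decomp]
    by (simp add: eventually_ball_finite)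
  then obtain l0 where "\<forall>l\<ge>l0. \<forall>x\<in>set hs. x - nsmul l (v N) \<in> H"
    unfolding eventually_sequentially by blast
  then have "set hs \<subseteq> {h + nsmul l (v N) | h. h \<in> H}" if "l \<ge> l0" for l
    using that by (auto intro!: exI[of _ "_ - nsmul l (v N)"])
  then show ?thesis
    by blast
qed

end
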